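(* Let $\pi\in S_n$ be shallow. Then: (1) there are no indices $r<i<j<s$ with $\pi_i=n$, $\pi_j=1$ and $\pi_r>\pi_s$ (i.e. $\pi$ avoids the mesh pattern $3\mathbf{4}\mathbf{1}2$, an occurrence of $3412$ whose "4" is the entry $n$ and whose "1" is the entry $1$); and (2) there are no indices $1<i<j<n$ with $\pi_i>\pi_1>\pi_n>\pi_j$ (i.e. $\pi$ avoids the pattern $\underline{3}41\underline{2}$, an occurrence of $3412$ whose "3" is in position $1$ and whose "2" is in position $n$).
   Context: For $\pi\in S_n$: $D(\pi)=\sum_{i}|\pi_i-i|$, $I(\pi)$ is the number of inversions, $T(\pi)=n-\mathrm{cyc}(\pi)$ with $\mathrm{cyc}$ the number of cycles in the disjoint cycle decomposition; $\pi$ is shallow if $I(\pi)+T(\pi)=D(\pi)$. *)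

theory Defs
  imports "HOL-Combinatorics.Combinatorics"
begin

text \<open>Permutations of S_n are represented as functions p :: nat => nat with p permutes {1..n}.\<close>

definition displacement :: "nat \<Rightarrow> (nat \<Rightarrow> nat) \<Rightarrow> int" where
  "displacement n p = (\<Sum>i\<in>{1..n}. \<bar>int (p i) - int i\<bar>)"

definition inversions :: "nat \<Rightarrow> (nat \<Rightarrow> nat) \<Rightarrow> nat" where
  "inversions n p = card {(i, j). i \<in> {1..n} \<and> j \<in> {1..n} \<and> i < j \<and> p i > p j}"

text \<open>Number of cycles in the disjoint cycle decomposition (fixed points count as cycles).\<close>
definition num_cycles :: "nat \<Rightarrow> (nat \<Rightarrow> nat) \<Rightarrow> nat" where
  "num_cycles n p = card (orbit p ` {1..n})"

definition reflection_length :: "nat \<Rightarrow> (nat \<Rightarrow> nat) \<Rightarrow> nat" where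
  "reflection_length n p = n - num_cycles n p"

definition shallow :: "nat \<Rightarrow> (nat \<Rightarrow> nat) \<Rightarrow> bool" where
  "shallow n p \<longleftrightarrow> int (inversions n p) + int (reflection_length n p) = displacement n p"

end

theory Submission
  imports Defs
begin

text \<open>Let the defect of a permutation of \<open>{1..n}\<close> be \<open>D - I - T\<close>. If \<open>n\<close> is not a fixed
  point, deleting \<open>n\<close> from its cycle (sending its position \<open>i0\<close> directly to \<open>p n\<close>) yields a
  permutation of \<open>{1..n-1}\<close> whose defect is smaller by twice a nonnegative slack. So the defect
  is nonnegative (the Diaconis--Graham inequality), and a shallow permutation reduces to a shallow
  one with zero slack; zero slack means that all entries right of \<open>i0\<close> exceed \<open>p n\<close> when
  \<open>p n \<le> i0\<close>, and all entries left of \<open>i0\<close> are below \<open>p n\<close> otherwise. Suitable weakenings of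
  both patterns survive this reduction, so by induction a shallow permutation contains neither.\<close>

text \<open>Where \<open>p\<close> runs \<open>a \<mapsto> c \<mapsto> p c\<close>, the composite jumps \<open>a \<mapsto> p c\<close>.\<close>

lemma orbit_comp_transpose:
  fixes p :: "'a \<Rightarrow> 'a"
  assumes "permutation p" and "p a = c" and "x \<noteq> c"
  shows "orbit (p \<circ> Transposition.transpose a c) x = orbit p x - {c}"
proof -
  define g where "g = p \<circ> Transposition.transpose a c"
  have g: "g y = (if y = a then p c else if y = c then c else p y)" for y
    using assms(2) by (simp add: g_def Transposition.transpose_def)
  have inj: "inj p"
    using assms(1) by (rule permutation_bijective[THEN bij_is_inj])
  have p_ne_c: "p y \<noteq> c" if "y \<noteq> a" for y
    using that assms(2) inj by (metis injD)
  have "y \<in> orbit p x \<and> y \<noteq> c" if "y \<in> orbit g x" for y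
    using that
  proof induction
    case base
    show ?case
      using g[of x] assms(2,3) p_ne_c[of x] p_ne_c[of c] by (auto intro: orbit_eqI)
  next
    case (step y)
    then show ?case
      using g[of y] assms(2) p_ne_c[of y] p_ne_c[of c] by (auto intro: orbit_eqI)
  qed
  moreover have "(y \<noteq> c \<longrightarrow> y \<in> orbit g x) \<and> (y = c \<longrightarrow> p c \<in> orbit g x)"
    if "y \<in> orbit p x" for y
    using that
  proof induction
    case base
    show ?case
    proof (cases "x = a")
      case True
      then show ?thesis using g[of x] assms(2) by (auto intro: orbit_eqI)
    next
      case False
      then show ?thesis using g[of x] assms(3) p_ne_c[of x] by (auto intro: orbit_eqI)
    qed
  next
    case (step y)
    show ?case
    proof (cases "y = c")
      case True
      then show ?thesis using step.IH by auto
    next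
      case y_ne_c: False
      then have "y \<in> orbit g x" using step.IH by simp
      show ?thesis
      proof (cases "y = a")
        case True
        then have "p c \<in> orbit g x" using \<open>y \<in> orbit g x\<close> g[of y] by (metis orbit.step)
        then show ?thesis using True assms(2) by simp
      next
        case False
        then show ?thesis
          using \<open>y \<in> orbit g x\<close> g[of y] y_ne_c p_ne_c[of y] by (metis orbit.step)
      qed
    qed
  qed
  ultimately show ?thesis
    unfolding g_def[symmetric] by blast
qed

lemma interval_Suc_insert: "{1..Suc m} = insert (Suc m) {1..m}"
  by auto

lemma num_cycles_Suc_fixed:
  assumes "p permutes {1..Suc m}" and "p (Suc m) = Suc m"
  shows "num_cycles (Suc m) p = Suc (num_cycles m p)"
proof -
  have "permutation p"
    using assms(1) permutation_permutes finite_atLeastAtMost by blast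
  have "orbit p (Suc m) \<noteq> orbit p x" if "x \<in> {1..m}" for x
  proof
    assume "orbit p (Suc m) = orbit p x"
    then have "x \<in> orbit p (Suc m)"
      using permutation_self_in_orbit[OF \<open>permutation p\<close>] by simp
    then show False
      using that assms(2) orbit_eq_singleton_iff[of p "Suc m"] by simp
  qed
  then have "orbit p (Suc m) \<notin> orbit p ` {1..m}"
    by blast
  then show ?thesis
    unfolding num_cycles_def interval_Suc_insert image_insert by (simp add: card_insert_disjoint)
qed

lemma num_cycles_remove_max:
  assumes perm: "p permutes {1..Suc m}" and a: "a \<in> {1..m}" and p_a: "p a = Suc m"
  shows "num_cycles (Suc m) p = num_cycles m (p \<circ> Transposition.transpose a (Suc m))"
proof -
  have "permutation p"
    using perm permutation_permutes finite_atLeastAtMost by blast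
  have same_orbit: "orbit p x = orbit p y" if "x \<in> orbit p y" for x y
    using orbit_cyclic_eq3[OF cyclic_on_orbit'[OF \<open>permutation p\<close>] that] .
  have "p (Suc m) \<noteq> Suc m"
    using a p_a permutes_inj[OF perm] by (metis inj_eq atLeastAtMost_iff Suc_n_not_le_n)
  moreover have "p (Suc m) \<in> {1..Suc m}"
    using permutes_in_image[OF perm] by simp
  ultimately have "p (Suc m) \<in> {1..m}"
    by (simp add: le_Suc_eq)
  moreover have "orbit p (Suc m) = orbit p (p (Suc m))"
    using permutation_orbit_step[OF \<open>permutation p\<close>] by simp
  ultimately have "orbit p (Suc m) \<in> orbit p ` {1..m}"
    by (rule rev_image_eqI)
  then have orbits: "orbit p ` {1..Suc m} = orbit p ` {1..m}"
    unfolding interval_Suc_insert image_insert by (rule insert_absorb)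
  have "inj_on (\<lambda>A. A - {Suc m}) (orbit p ` {1..m})"
  proof (rule inj_onI)
    fix A B
    assume "A \<in> orbit p ` {1..m}" "B \<in> orbit p ` {1..m}" and eq: "A - {Suc m} = B - {Suc m}"
    then obtain x y where x: "x \<in> {1..m}" "A = orbit p x" and y: "B = orbit p y"
      by blast
    have "x \<in> A - {Suc m}"
      using x permutation_self_in_orbit[OF \<open>permutation p\<close>, of x] by simp
    then have "x \<in> orbit p y"
      using eq y by simp
    then show "A = B"
      using same_orbit x(2) y by simp
  qed
  moreover have "orbit (p \<circ> Transposition.transpose a (Suc m)) ` {1..m}
      = (\<lambda>A. A - {Suc m}) ` orbit p ` {1..m}"
    unfolding image_image
    by (intro image_cong refl orbit_comp_transpose[OF \<open>permutation p\<close> p_a]) simp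
  ultimately show ?thesis
    unfolding num_cycles_def orbits by (simp add: card_image)
qed

lemma inversions_Suc:
  "inversions (Suc m) q = inversions m q + card {i \<in> {1..m}. q (Suc m) < q i}"
proof -
  have eq: "{(i, j). i \<in> {1..Suc m} \<and> j \<in> {1..Suc m} \<and> i < j \<and> q i > q j} =
      {(i, j). i \<in> {1..m} \<and> j \<in> {1..m} \<and> i < j \<and> q i > q j} \<union>
      (\<lambda>i. (i, Suc m)) ` {i \<in> {1..m}. q (Suc m) < q i}"
    by (auto simp: le_Suc_eq)
  have fin: "finite {(i, j). i \<in> {1..m} \<and> j \<in> {1..m} \<and> i < j \<and> q i > q j}"
    by (rule finite_subset[of _ "{1..m} \<times> {1..m}"]) auto
  have disj: "{(i, j). i \<in> {1..m} \<and> j \<in> {1..m} \<and> i < j \<and> q i > q j} \<inter>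
      (\<lambda>i. (i, Suc m)) ` {i \<in> {1..m}. q (Suc m) < q i} = {}"
    by auto
  show ?thesis
    unfolding inversions_def eq
    by (subst card_Un_disjoint[OF fin _ disj]) (simp_all add: card_image inj_on_def)
qed

definition inversions_at :: "nat \<Rightarrow> (nat \<Rightarrow> nat) \<Rightarrow> nat \<Rightarrow> nat" where
  "inversions_at n q c =
     card {i \<in> {1..n}. i < c \<and> q c < q i} + card {j \<in> {1..n}. c < j \<and> q j < q c}"

lemma inversions_change_at:
  assumes c: "c \<in> {1..n}" and agree: "\<And>x. x \<in> {1..n} \<Longrightarrow> x \<noteq> c \<Longrightarrow> q x = q' x"
  shows "inversions n q + inversions_at n q' c = inversions n q' + inversions_at n q c"
proof -
  define R where "R r = {(i, j). i \<in> {1..n} \<and> j \<in> {1..n} \<and> i < j \<and> r j < r i \<and> i \<noteq> c \<and> j \<noteq> c}"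
    for r :: "nat \<Rightarrow> nat"
  have split: "inversions n r = card (R r) + inversions_at n r c" for r
  proof -
    define L where "L = {i \<in> {1..n}. i < c \<and> r c < r i}"
    define U where "U = {j \<in> {1..n}. c < j \<and> r j < r c}"
    have fin: "finite (R r)"
      unfolding R_def by (rule finite_subset[of _ "{1..n} \<times> {1..n}"]) auto
    have eq: "{(i, j). i \<in> {1..n} \<and> j \<in> {1..n} \<and> i < j \<and> r i > r j} =
        R r \<union> ((\<lambda>i. (i, c)) ` L \<union> Pair c ` U)"
      using c unfolding R_def L_def U_def by auto
    have "card ((\<lambda>i. (i, c)) ` L \<union> Pair c ` U) = card L + card U"
      by (subst card_Un_disjoint) (auto simp: L_def U_def card_image inj_on_def)
    then show ?thesis
      unfolding inversions_def inversions_at_def eq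
      by (subst card_Un_disjoint[OF fin]) (auto simp: R_def L_def U_def)
  qed
  have "R q = R q'"
    unfolding R_def using agree by auto
  then show ?thesis
    using split[of q] split[of q'] by simp
qed

lemma displacement_Suc:
  "displacement (Suc m) q = displacement m q + \<bar>int (q (Suc m)) - int (Suc m)\<bar>"
  unfolding displacement_def by (simp add: add.commute)

lemma displacement_change_at:
  assumes "c \<in> {1..n}" and "\<And>x. x \<in> {1..n} \<Longrightarrow> x \<noteq> c \<Longrightarrow> q x = q' x"
  shows "displacement n q - \<bar>int (q c) - int c\<bar> = displacement n q' - \<bar>int (q' c) - int c\<bar>"
proof -
  have "(\<Sum>i\<in>{1..n} - {c}. \<bar>int (q i) - int i\<bar>) = (\<Sum>i\<in>{1..n} - {c}. \<bar>int (q' i) - int i\<bar>)"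
    using assms(2) by (intro sum.cong) auto
  then show ?thesis
    using assms(1) unfolding displacement_def by (simp add: sum.remove)
qed

definition defect :: "nat \<Rightarrow> (nat \<Rightarrow> nat) \<Rightarrow> int" where
  "defect n p = displacement n p - int (inversions n p) - int (reflection_length n p)"

lemma shallow_iff_defect_zero: "shallow n p \<longleftrightarrow> defect n p = 0"
  unfolding shallow_def defect_def by linarith

lemma num_cycles_le: "num_cycles n p \<le> n"
  unfolding num_cycles_def using card_image_le[of "{1..n}" "orbit p"] by simp

lemma defect_Suc_fixed:
  assumes "p permutes {1..Suc m}" and "p (Suc m) = Suc m"
  shows "p permutes {1..m}" and "defect (Suc m) p = defect m p"
proof -
  show "p permutes {1..m}"
    using assms(2) by (intro permutes_superset[OF assms(1)]) (auto simp: le_Suc_eq)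
  have "p i \<le> p (Suc m)" if "i \<in> {1..m}" for i
    using permutes_in_image[OF assms(1), of i] that assms(2) by auto
  then have "{i \<in> {1..m}. p (Suc m) < p i} = {}"
    by (auto simp: not_less[symmetric])
  then have "inversions (Suc m) p = inversions m p"
    by (simp add: inversions_Suc)
  then show "defect (Suc m) p = defect m p"
    using num_cycles_Suc_fixed[OF assms] num_cycles_le[of m p] assms(2)
    unfolding defect_def reflection_length_def by (simp add: displacement_Suc)
qed

locale max_removal =
  fixes m :: nat and p :: "nat \<Rightarrow> nat" and i0 :: nat
  assumes perm: "p permutes {1..Suc m}" and i0_range: "i0 \<in> {1..m}" and p_i0: "p i0 = Suc m"
begin

text \<open>Deleting the entry \<open>Suc m\<close> from its cycle: \<open>i0\<close> is sent directly to \<open>p (Suc m)\<close>.\<close>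
definition reduced :: "nat \<Rightarrow> nat" where
  "reduced = p \<circ> Transposition.transpose i0 (Suc m)"

definition larger_right :: nat where
  "larger_right = card {x \<in> {i0<..m}. p (Suc m) < p x}"

lemma reduced_i0 [simp]: "reduced i0 = p (Suc m)"
  and reduced_other [simp]: "x \<noteq> i0 \<Longrightarrow> x \<noteq> Suc m \<Longrightarrow> reduced x = p x"
  by (simp_all add: reduced_def Transposition.transpose_def)

lemma reduced_permutes: "reduced permutes {1..m}"
proof (rule permutes_superset)
  have "i0 \<in> {1..Suc m}" "Suc m \<in> {1..Suc m}"
    using i0_range by auto
  then show "reduced permutes {1..Suc m}"
    unfolding reduced_def by (intro permutes_compose[OF permutes_swap_id perm])
  fix x assume "x \<in> {1..Suc m} - {1..m}"
  then have "x = Suc m"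
    by auto
  then show "reduced x = x"
    using i0_range p_i0 by (simp add: reduced_def Transposition.transpose_def)
qed

lemma p_eq_iff: "p x = p y \<longleftrightarrow> x = y"
  using permutes_inj[OF perm] by (auto dest: injD)

lemma p_range: "x \<in> {1..Suc m} \<Longrightarrow> x \<noteq> i0 \<Longrightarrow> p x \<in> {1..m}"
  using permutes_in_image[OF perm, of x] p_eq_iff[of x i0] p_i0 by auto

lemma last_range: "p (Suc m) \<in> {1..m}"
  using p_range[of "Suc m"] i0_range by auto

lemma card_right_of_i0:
  "m - i0 = larger_right + card {x \<in> {i0<..m}. p x < p (Suc m)}"
proof -
  have "p (Suc m) < p x \<or> p x < p (Suc m)" if "x \<in> {i0<..m}" for x
    using that p_eq_iff[of x "Suc m"] by auto
  then have "{i0<..m} = {x \<in> {i0<..m}. p (Suc m) < p x} \<union> {x \<in> {i0<..m}. p x < p (Suc m)}"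
    by blast
  moreover have "card ({x \<in> {i0<..m}. p (Suc m) < p x} \<union> {x \<in> {i0<..m}. p x < p (Suc m)})
      = larger_right + card {x \<in> {i0<..m}. p x < p (Suc m)}"
    unfolding larger_right_def by (rule card_Un_disjoint) auto
  ultimately show ?thesis
    by (metis card_greaterThanAtMost)
qed

lemma card_above_last:
  "card {x \<in> {1..m}. p (Suc m) < p x} = Suc (card {x \<in> {1..m}. x < i0 \<and> p (Suc m) < p x} + larger_right)"
proof -
  have "{x \<in> {1..m}. p (Suc m) < p x} =
      insert i0 ({x \<in> {1..m}. x < i0 \<and> p (Suc m) < p x} \<union> {x \<in> {i0<..m}. p (Suc m) < p x})"
    using i0_range p_i0 last_range by (auto simp: nat_neq_iff)
  moreover have "card ({x \<in> {1..m}. x < i0 \<and> p (Suc m) < p x} \<union> {x \<in> {i0<..m}. p (Suc m) < p x})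
      = card {x \<in> {1..m}. x < i0 \<and> p (Suc m) < p x} + larger_right"
    unfolding larger_right_def by (rule card_Un_disjoint) auto
  ultimately show ?thesis
    by simp
qed

lemma inversions_at_i0:
  "inversions_at m p i0 = m - i0"
  "inversions_at m reduced i0 =
     card {x \<in> {1..m}. x < i0 \<and> p (Suc m) < p x} + card {x \<in> {i0<..m}. p x < p (Suc m)}"
proof -
  have "p x < p i0" if "x \<in> {1..m}" "x \<noteq> i0" for x
    using p_range[of x] that p_i0 by simp
  then have "{i \<in> {1..m}. i < i0 \<and> p i0 < p i} = {}" "{j \<in> {1..m}. i0 < j \<and> p j < p i0} = {i0<..m}"
    using i0_range by fastforce+
  then show "inversions_at m p i0 = m - i0"
    by (simp add: inversions_at_def)
  have "{i \<in> {1..m}. i < i0 \<and> reduced i0 < reduced i} = {x \<in> {1..m}. x < i0 \<and> p (Suc m) < p x}"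
    "{j \<in> {1..m}. i0 < j \<and> reduced j < reduced i0} = {x \<in> {i0<..m}. p x < p (Suc m)}"
    using i0_range by auto
  then show "inversions_at m reduced i0 =
     card {x \<in> {1..m}. x < i0 \<and> p (Suc m) < p x} + card {x \<in> {i0<..m}. p x < p (Suc m)}"
    unfolding inversions_at_def by simp
qed

lemma inversions_reduced: "inversions (Suc m) p = inversions m reduced + 2 * larger_right + 1"
proof -
  have "inversions m p + inversions_at m reduced i0 = inversions m reduced + inversions_at m p i0"
    by (rule inversions_change_at[OF i0_range]) simp
  then show ?thesis
    using inversions_Suc[of m p] card_above_last card_right_of_i0 inversions_at_i0 by simp
qed

lemma displacement_reduced:
  "displacement (Suc m) p = displacement m reduced + 2 * (int (Suc m) - int (max i0 (p (Suc m))))"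
proof -
  have "displacement m p - \<bar>int (p i0) - int i0\<bar> = displacement m reduced - \<bar>int (reduced i0) - int i0\<bar>"
    using i0_range by (intro displacement_change_at) auto
  then show ?thesis
    using displacement_Suc[of m p] p_i0 i0_range last_range
    by (cases "i0 \<le> p (Suc m)") (simp_all add: max_def)
qed

lemma larger_right_image:
  "p ` {x \<in> {i0<..m}. p (Suc m) < p x} \<subseteq> {p (Suc m)<..m}"
  "card (p ` {x \<in> {i0<..m}. p (Suc m) < p x}) = larger_right"
proof -
  show "p ` {x \<in> {i0<..m}. p (Suc m) < p x} \<subseteq> {p (Suc m)<..m}"
    using p_range i0_range by fastforce
  show "card (p ` {x \<in> {i0<..m}. p (Suc m) < p x}) = larger_right"
    unfolding larger_right_def
    by (rule card_image[OF inj_on_subset[OF permutes_inj[OF perm] subset_UNIV]])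
qed

lemma larger_right_le: "larger_right \<le> m - max i0 (p (Suc m))"
proof -
  have "larger_right \<le> card {i0<..m}"
    unfolding larger_right_def by (intro card_mono) auto
  moreover have "larger_right \<le> card {p (Suc m)<..m}"
    using card_mono[OF _ larger_right_image(1)] larger_right_image(2) by simp
  ultimately show ?thesis
    by simp
qed

lemma defect_reduced:
  "defect (Suc m) p = defect m reduced + 2 * (int (m - max i0 (p (Suc m))) - int larger_right)"
proof -
  have "num_cycles (Suc m) p = num_cycles m reduced"
    unfolding reduced_def using num_cycles_remove_max[OF perm i0_range p_i0] .
  moreover have "max i0 (p (Suc m)) \<le> m"
    using i0_range last_range by simp
  ultimately show ?thesis
    using num_cycles_le[of m reduced]
    unfolding defect_def reflection_length_def inversions_reduced displacement_reduced
    by (simp add: of_nat_diff)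
qed

end

lemma permutes_Suc_cases:
  assumes "p permutes {1..Suc m}"
  obtains "p (Suc m) = Suc m" | i0 where "max_removal m p i0"
proof -
  have "Suc m \<in> p ` {1..Suc m}"
    using permutes_image[OF assms] by simp
  then obtain i0 where i0: "i0 \<in> {1..Suc m}" "p i0 = Suc m"
    by (rule imageE) simp
  show ?thesis
  proof (cases "i0 = Suc m")
    case True
    then show ?thesis
      using that(1) i0(2) by simp
  next
    case False
    then have "i0 \<in> {1..m}"
      using i0(1) by auto
    then show ?thesis
      using assms i0(2) by (intro that(2) max_removal.intro)
  qed
qed

theorem diaconis_graham_inequality: "p permutes {1..n} \<Longrightarrow> 0 \<le> defect n p"
proof (induction n arbitrary: p)
  case 0
  then show ?case
    by (simp add: defect_def displacement_def inversions_def reflection_length_def)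
next
  case (Suc m)
  from Suc.prems show ?case
  proof (cases rule: permutes_Suc_cases)
    case 1
    then show ?thesis
      using Suc defect_Suc_fixed by metis
  next
    case (2 i0)
    then interpret max_removal m p i0 .
    show ?thesis
      using Suc.IH[OF reduced_permutes] defect_reduced larger_right_le by simp
  qed
qed

locale shallow_max_removal = max_removal +
  assumes defect_zero: "defect (Suc m) p = 0"
begin

lemma reduced_defect_zero: "defect m reduced = 0"
  and larger_right_eq: "larger_right = m - max i0 (p (Suc m))"
  using defect_zero defect_reduced larger_right_le diaconis_graham_inequality[OF reduced_permutes]
  by simp_all

lemma right_of_i0_above_last:
  assumes "p (Suc m) \<le> i0" and "i0 < x" and "x \<le> m"
  shows "p (Suc m) < p x"
proof -
  have "card {x \<in> {i0<..m}. p (Suc m) < p x} = card {i0<..m}"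
    using larger_right_eq max_absorb1[OF assms(1)] unfolding larger_right_def by simp
  then have "{x \<in> {i0<..m}. p (Suc m) < p x} = {i0<..m}"
    by (intro card_subset_eq) auto
  moreover have "x \<in> {i0<..m}"
    using assms(2,3) by simp
  ultimately show ?thesis
    by (metis (mono_tags, lifting) mem_Collect_eq)
qed

lemma left_of_i0_below_last:
  assumes "i0 < p (Suc m)" and "0 < x" and "x < i0"
  shows "p x < p (Suc m)"
proof (rule ccontr)
  assume "\<not> p x < p (Suc m)"
  moreover have "p x \<in> {1..m}" "p x \<noteq> p (Suc m)"
    using p_range[of x] assms i0_range p_eq_iff[of x "Suc m"] by auto
  ultimately have "p x \<in> {p (Suc m)<..m}"
    by simp
  moreover have "p ` {x \<in> {i0<..m}. p (Suc m) < p x} = {p (Suc m)<..m}"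
    using larger_right_image larger_right_eq max_absorb2[of i0 "p (Suc m)"] assms(1)
    by (intro card_subset_eq) auto
  ultimately have "p x \<in> p ` {x \<in> {i0<..m}. p (Suc m) < p x}"
    by simp
  then obtain y where "y \<in> {i0<..m}" "p x = p y"
    by auto
  then show False
    using assms(3) by (simp add: p_eq_iff)
qed

end

text \<open>Weakenings of the two patterns that survive deleting the entry \<open>n\<close>: the ``4'' of the
  first only needs all larger entries to its right, the ``2'' of the second only needs all entries
  to its right to be larger.\<close>

definition has_mesh_3412 :: "nat \<Rightarrow> (nat \<Rightarrow> nat) \<Rightarrow> bool" where
  "has_mesh_3412 n p \<longleftrightarrow> (\<exists>r i j s. 1 \<le> r \<and> r < i \<and> i < j \<and> j < s \<and> s \<le> n \<and>
     p j = 1 \<and> p s < p r \<and> p r < p i \<and> (\<forall>x \<in> {1..n}. p i < p x \<longrightarrow> i < x))"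

definition has_boundary_3412 :: "nat \<Rightarrow> (nat \<Rightarrow> nat) \<Rightarrow> bool" where
  "has_boundary_3412 n p \<longleftrightarrow> (\<exists>i j c. 1 < i \<and> i < j \<and> j < c \<and> c \<le> n \<and>
     p c < p 1 \<and> p 1 < p i \<and> p j < p c \<and> (\<forall>x \<in> {c<..n}. p c < p x))"

lemma has_mesh_3412_Suc_fixed:
  assumes "p permutes {1..Suc m}" and "p (Suc m) = Suc m" and "has_mesh_3412 (Suc m) p"
  shows "has_mesh_3412 m p"
proof -
  obtain r i j s where pos: "1 \<le> r" "r < i" "i < j" "j < s" "s \<le> Suc m"
    and val: "p j = 1" "p s < p r" "p r < p i" and above: "\<forall>x \<in> {1..Suc m}. p i < p x \<longrightarrow> i < x"
    using assms(3) unfolding has_mesh_3412_def by blast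
  have "p r \<le> Suc m"
    using permutes_in_image[OF assms(1), of r] pos by simp
  then have "s \<noteq> Suc m"
    using val(2) assms(2) by auto
  then show ?thesis
    unfolding has_mesh_3412_def using pos val above by (intro exI[of _ r] exI[of _ i] exI[of _ j] exI[of _ s]) auto
qed

lemma has_boundary_3412_Suc_fixed:
  assumes "p permutes {1..Suc m}" and "p (Suc m) = Suc m" and "has_boundary_3412 (Suc m) p"
  shows "has_boundary_3412 m p"
proof -
  obtain i j c where pos: "1 < i" "i < j" "j < c" "c \<le> Suc m"
    and val: "p c < p 1" "p 1 < p i" "p j < p c" and above: "\<forall>x \<in> {c<..Suc m}. p c < p x"
    using assms(3) unfolding has_boundary_3412_def by blast
  have "p 1 \<le> Suc m"
    using permutes_in_image[OF assms(1), of 1] by simp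
  then have "c \<noteq> Suc m"
    using val(1) assms(2) by auto
  then show ?thesis
    unfolding has_boundary_3412_def using pos val above by (intro exI[of _ i] exI[of _ j] exI[of _ c]) auto
qed

context shallow_max_removal
begin

lemma i0_less_last_if_one_right:
  assumes "p j = 1" and "i0 < j" and "j \<le> m"
  shows "i0 < p (Suc m)"
  using right_of_i0_above_last[OF _ assms(2,3)] assms(1) last_range by fastforce

lemma has_mesh_3412_reduced_at_i0:
  assumes pos: "1 \<le> r" "r < i0" "i0 < j" "j < s" "s \<le> Suc m" and val: "p j = 1" "p s < p r"
  shows "has_mesh_3412 m reduced"
proof -
  have "i0 < p (Suc m)"
    using i0_less_last_if_one_right val(1) pos by simp
  then have "p r < p (Suc m)"
    using left_of_i0_below_last pos by simp
  then have "s \<noteq> Suc m"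
    using val(2) by auto
  have "j \<noteq> i0"
    using val(1) p_i0 i0_range by auto
  have "i0 < x" if "x \<in> {1..m}" "reduced i0 < reduced x" for x
  proof -
    have "x \<noteq> i0"
      using that by auto
    moreover have "p (Suc m) < p x"
      using that \<open>x \<noteq> i0\<close> by simp
    then have "\<not> x < i0"
      using left_of_i0_below_last[OF \<open>i0 < p (Suc m)\<close>, of x] that by auto
    ultimately show ?thesis
      by simp
  qed
  then show ?thesis
    unfolding has_mesh_3412_def using pos val \<open>p r < p (Suc m)\<close> \<open>s \<noteq> Suc m\<close> \<open>j \<noteq> i0\<close>
    by (intro exI[of _ r] exI[of _ i0] exI[of _ j] exI[of _ s]) auto
qed

lemma has_mesh_3412_reduced:
  assumes "has_mesh_3412 (Suc m) p"
  shows "has_mesh_3412 m reduced"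
proof -
  obtain r i j s where pos: "1 \<le> r" "r < i" "i < j" "j < s" "s \<le> Suc m"
    and val: "p j = 1" "p s < p r" "p r < p i" and above: "\<forall>x \<in> {1..Suc m}. p i < p x \<longrightarrow> i < x"
    using assms unfolding has_mesh_3412_def by blast
  have "i \<le> i0"
  proof (rule ccontr)
    assume "\<not> i \<le> i0"
    then have "p i < p i0"
      using p_range[of i] pos p_i0 by auto
    then show False
      using above i0_range \<open>\<not> i \<le> i0\<close> by auto
  qed
  show ?thesis
  proof (cases "i = i0")
    case True
    then show ?thesis
      using has_mesh_3412_reduced_at_i0 pos val by simp
  next
    case False
    then have "i < i0"
      using \<open>i \<le> i0\<close> by simp
    have "j \<noteq> i0"
      using val(1) p_i0 i0_range by auto
    then have red: "reduced r = p r" "reduced j = 1" "reduced i = p i"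
      using pos val(1) \<open>i < i0\<close> i0_range by auto
    have above_red: "i < x" if "x \<in> {1..m}" "reduced i < reduced x" for x
      using that above \<open>i < i0\<close> red(3) by (cases "x = i0") auto
    show ?thesis
    proof (cases "s = Suc m")
      case False
      have "s \<noteq> i0"
        using val(2) p_i0 p_range[of r] pos by auto
      then show ?thesis
        unfolding has_mesh_3412_def using pos val red above_red False
        by (intro exI[of _ r] exI[of _ i] exI[of _ j] exI[of _ s]) auto
    next
      case True
      have "j < i0"
      proof (rule ccontr)
        assume "\<not> j < i0"
        then have "i0 < p (Suc m)"
          using i0_less_last_if_one_right val(1) pos \<open>j \<noteq> i0\<close> True by simp
        then have "p i < p (Suc m)"
          using left_of_i0_below_last pos \<open>i < i0\<close> by simp
        then show False
          using val True by simp
      qed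
      then show ?thesis
        unfolding has_mesh_3412_def using pos val red above_red True i0_range
        by (intro exI[of _ r] exI[of _ i] exI[of _ j] exI[of _ i0]) auto
    qed
  qed
qed

lemma has_boundary_3412_reduced_last:
  assumes pos: "1 < i" "i < j" "j < Suc m" and val: "p (Suc m) < p 1" "p 1 < p i" "p j < p (Suc m)"
  shows "has_boundary_3412 m reduced"
proof -
  have "p i \<le> Suc m"
    using permutes_in_image[OF perm, of i] pos by simp
  then have "1 \<noteq> i0" "j \<noteq> i0"
    using val p_i0 by auto
  then have red: "reduced 1 = p 1" "reduced j = p j"
    using pos i0_range by auto
  have "p (Suc m) \<le> i0"
  proof (rule ccontr)
    assume "\<not> p (Suc m) \<le> i0"
    then have "p 1 < p (Suc m)"
      using left_of_i0_below_last[of 1] \<open>1 \<noteq> i0\<close> i0_range by simp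
    then show False
      using val(1) by simp
  qed
  have "j < i0"
  proof (rule ccontr)
    assume "\<not> j < i0"
    then have "p (Suc m) < p j"
      using right_of_i0_above_last[OF \<open>p (Suc m) \<le> i0\<close>, of j] \<open>j \<noteq> i0\<close> pos by simp
    then show False
      using val(3) by simp
  qed
  have "\<forall>x \<in> {i0<..m}. reduced i0 < reduced x"
    using right_of_i0_above_last[OF \<open>p (Suc m) \<le> i0\<close>] by auto
  then show ?thesis
    unfolding has_boundary_3412_def using pos val red \<open>j < i0\<close> i0_range
    by (intro exI[of _ i] exI[of _ j] exI[of _ i0]) auto
qed

lemma has_boundary_3412_reduced:
  assumes "has_boundary_3412 (Suc m) p"
  shows "has_boundary_3412 m reduced"
proof -
  obtain i j c where pos: "1 < i" "i < j" "j < c" "c \<le> Suc m"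
    and val: "p c < p 1" "p 1 < p i" "p j < p c" and above: "\<forall>x \<in> {c<..Suc m}. p c < p x"
    using assms unfolding has_boundary_3412_def by blast
  show ?thesis
  proof (cases "c = Suc m")
    case True
    then show ?thesis
      using has_boundary_3412_reduced_last pos val by simp
  next
    case False
    have "p 1 \<noteq> Suc m" "p j \<noteq> Suc m" "p c \<noteq> Suc m"
      using val p_range[of i] pos p_i0 p_eq_iff[of i i0] by (auto simp: less_Suc_eq_le)
    then have "1 \<noteq> i0" "j \<noteq> i0" "c \<noteq> i0"
      using p_i0 by auto
    then have red: "reduced 1 = p 1" "reduced j = p j" "reduced c = p c"
      using pos False i0_range by auto
    have "p c < p (Suc m)"
      using above pos False by auto
    then have above_red: "reduced c < reduced x" if "x \<in> {c<..m}" for x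
      using that above red(3) by (cases "x = i0") auto
    have "p 1 < reduced i"
    proof (cases "i = i0")
      case True
      then have "i0 < p (Suc m)"
        using right_of_i0_above_last[of j] val(3) pos \<open>p c < p (Suc m)\<close> False by fastforce
      then show ?thesis
        using left_of_i0_below_last[of 1] pos True by simp
    next
      case False
      then show ?thesis
        using val(2) pos \<open>c \<noteq> Suc m\<close> by simp
    qed
    then show ?thesis
      unfolding has_boundary_3412_def using pos val red above_red False
      by (intro exI[of _ i] exI[of _ j] exI[of _ c]) auto
  qed
qed

end

lemma defect_zero_descent:
  assumes "p permutes {1..n}" and "defect n p = 0"
    and fixed: "\<And>m p. p permutes {1..Suc m} \<Longrightarrow> p (Suc m) = Suc m \<Longrightarrow> P (Suc m) p \<Longrightarrow> P m p"
    and moved: "\<And>m p i0. shallow_max_removal m p i0 \<Longrightarrow> P (Suc m) p \<Longrightarrow> P m (max_removal.reduced m p i0)"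
    and base: "\<And>p. \<not> P 0 p"
  shows "\<not> P n p"
  using assms(1,2)
proof (induction n arbitrary: p)
  case 0
  then show ?case
    using base by simp
next
  case (Suc m)
  from Suc.prems(1) show ?case
  proof (cases rule: permutes_Suc_cases)
    case 1
    then show ?thesis
      using Suc defect_Suc_fixed fixed by metis
  next
    case (2 i0)
    then interpret shallow_max_removal m p i0
      using Suc.prems(2) by (intro shallow_max_removal.intro shallow_max_removal_axioms.intro)
    show ?thesis
      using Suc.IH[OF reduced_permutes reduced_defect_zero] moved shallow_max_removal_axioms by blast
  qed
qed

corollary shallow_not_has_mesh_3412:
  assumes "p permutes {1..n}" and "shallow n p"
  shows "\<not> has_mesh_3412 n p"
  using assms(2) unfolding shallow_iff_defect_zero
  by (rule defect_zero_descent[where P = has_mesh_3412, OF assms(1) _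
        has_mesh_3412_Suc_fixed shallow_max_removal.has_mesh_3412_reduced])
    (auto simp: has_mesh_3412_def)

corollary shallow_not_has_boundary_3412:
  assumes "p permutes {1..n}" and "shallow n p"
  shows "\<not> has_boundary_3412 n p"
  using assms(2) unfolding shallow_iff_defect_zero
  by (rule defect_zero_descent[where P = has_boundary_3412, OF assms(1) _
        has_boundary_3412_Suc_fixed shallow_max_removal.has_boundary_3412_reduced])
    (auto simp: has_boundary_3412_def)

lemma has_mesh_3412I:
  assumes "p permutes {1..n}"
    and "1 \<le> r" "r < i" "i < j" "j < s" "s \<le> n" "p i = n" "p j = 1" "p s < p r"
  shows "has_mesh_3412 n p"
proof -
  have bounded: "p x \<le> n" if "x \<in> {1..n}" for x
    using permutes_in_image[OF assms(1), of x] that by simp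
  have "p r \<noteq> p i"
    using permutes_inj[OF assms(1)] assms(3) by (auto dest: injD)
  then have "p r < p i"
    using bounded[of r] assms by simp
  moreover have "\<forall>x \<in> {1..n}. p i < p x \<longrightarrow> i < x"
    using bounded assms(7) by fastforce
  ultimately show ?thesis
    unfolding has_mesh_3412_def using assms(2-9) by blast
qed

lemma has_boundary_3412I:
  assumes "1 < i" "i < j" "j < n" "p 1 < p i" "p n < p 1" "p j < p n"
  shows "has_boundary_3412 n p"
  unfolding has_boundary_3412_def using assms by (intro exI[of _ i] exI[of _ j] exI[of _ n]) auto

theorem theorem2p8:
  fixes n :: nat and p :: "nat \<Rightarrow> nat"
  assumes "p permutes {1..n}" and "shallow n p"
  shows "\<not> (\<exists>r i j s. 1 \<le> r \<and> r < i \<and> i < j \<and> j < s \<and> s \<le> n \<and>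
                 p i = n \<and> p j = 1 \<and> p r > p s) \<and>
         \<not> (\<exists>i j. 1 < i \<and> i < j \<and> j < n \<and> p i > p 1 \<and> p 1 > p n \<and> p n > p j)"
  using has_mesh_3412I[OF assms(1)] shallow_not_has_mesh_3412[OF assms]
    has_boundary_3412I shallow_not_has_boundary_3412[OF assms]
  by blast

end
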